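(* For all integers $1\le k\le n$, the probability (under $\mathbb{P}_n$) that the $k$-th boundary step of a type-B permutation tableau of size $n$ is a west step and the diagonal cell of the column corresponding to this step contains a $1$ equals $\dfrac12$.
   Context: A Ferrers diagram is a left-justified array of cells whose row lengths weakly decrease from top to bottom (rows of length $0$ are allowed). Its half-perimeter is the number of rows plus the number of columns. Its southeast boundary, traversed from the northeast corner to the southwest corner, consists of $n$ unit steps, each south or west; south steps correspond to rows and west steps to columns. If the diagram has $c$ columns, the shifted Ferrers diagram is obtained by inserting $c$ new left-justified rows above it, of lengths $c,c-1,\dots,1$ from top to bottom; the rightmost cell of each inserted row is a diagonal cell, and each column contains exactly one diagonal cell. A type-B permutation tableau of size $n$ is a filling of a shifted Ferrers diagram of half-perimeter $n$ with $0$'s and $1$'s such that: (1) every column contains at least one $1$; (2) no $0$ has both a $1$ above it in its column and a $1$ to its left in its row; (3) if a diagonal cell contains $0$ then every cell of its row contains $0$. Let $\mathcal{B}_n$ be the set of such tableaux and $\mathbb{P}_n$ the uniform probability measure on $\mathcal{B}_n$. *)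

theory Defs
  imports "HOL-Probability.Probability_Mass_Function"
begin

(* Steps of the southeast boundary, read from the NE corner to the SW corner. *)
datatype step = South | West

(* A type-B tableau of size n is encoded as a pair (w, T):
   - w :: step list of length n is the boundary path; step p (0-indexed) is the
     (p+1)-th step.  South steps index the rows of the Ferrers diagram, west steps
     index its columns.
   - Rows of the shifted diagram are indexed by ALL steps: a south step p is the
     original row of p, a west step p is the inserted row whose diagonal cell lies
     in the column of p.  Columns are indexed by west steps.
   - Cell (r, c) exists iff c is a west step and r \<le> c; the diagonal cell of
     column c is (c, c).  (Original row r contains column c iff r < c.)
   - T is the set of cells filled with 1 (all other cells contain 0). *)

definition tcells :: "step list \<Rightarrow> (nat \<times> nat) set" where
  "tcells w = {(r, c). c < length w \<and> w ! c = West \<and> r \<le> c}"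

(* column c' lies strictly to the left of column c: later west steps are further left *)
definition col_left :: "nat \<Rightarrow> nat \<Rightarrow> bool" where
  "col_left c' c \<longleftrightarrow> c < c'"

(* row r' lies strictly above row r: inserted rows lie above original rows;
   within the inserted rows the diagonal cell is the top cell of its column
   (rows of later west steps are higher); original rows go down along the path. *)
definition row_above :: "step list \<Rightarrow> nat \<Rightarrow> nat \<Rightarrow> bool" where
  "row_above w r' r \<longleftrightarrow>
     (w ! r' = West \<and> w ! r = South) \<or>
     (w ! r' = West \<and> w ! r = West \<and> r < r') \<or>
     (w ! r' = South \<and> w ! r = South \<and> r' < r)"

definition is_typeB_tableau :: "nat \<Rightarrow> step list \<times> (nat \<times> nat) set \<Rightarrow> bool" where
  "is_typeB_tableau n t \<longleftrightarrow>
     (let w = fst t; T = snd t in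
       length w = n \<and> T \<subseteq> tcells w \<and>
       \<comment> \<open>(1) every column contains a 1\<close>
       (\<forall>c < n. w ! c = West \<longrightarrow> (\<exists>r. (r, c) \<in> T)) \<and>
       \<comment> \<open>(2) no 0 with a 1 above it in its column and a 1 to its left in its row\<close>
       (\<forall>(r, c) \<in> tcells w. (r, c) \<notin> T \<longrightarrow>
           \<not> ((\<exists>r'. (r', c) \<in> T \<and> row_above w r' r) \<and>
              (\<exists>c'. (r, c') \<in> T \<and> col_left c' c))) \<and>
       \<comment> \<open>(3) a 0 in a diagonal cell forces its whole row to be 0\<close>
       (\<forall>c < n. w ! c = West \<longrightarrow> (c, c) \<notin> T \<longrightarrow> (\<forall>c'. (c, c') \<notin> T)))"

definition typeB_tableaux :: "nat \<Rightarrow> (step list \<times> (nat \<times> nat) set) set" where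
  "typeB_tableaux n = {t. is_typeB_tableau n t}"

definition PB :: "nat \<Rightarrow> (step list \<times> (nat \<times> nat) set) pmf" where
  "PB n = pmf_of_set (typeB_tableaux n)"

end

theory Submission
  imports Defs
begin

(* Build the tableaux one boundary step at a time.  Call a row free if a new column, added at
   the left by a further west step, may carry a 1 in it.  A south step adds one free row.  A west
   step with 1s in a set X of free rows and diagonal entry d leaves as free rows X plus the new
   row if d = 1, and otherwise (X nonempty) X together with the free rows not below any row of X.
   Hence the number of completions of a tableau depends only on its number of free rows.  Since
   the free rows form a chain from top to bottom, an identity for sums over the subsets of a
   finite chain shows that the extensions with d = 1 have as many completions as all the other
   extensions together; so exactly half of the tableaux of size n have a 1 on the diagonal of a
   west step at any given position. *)

lemma sum_Pow_card:
  fixes g :: "nat \<Rightarrow> 'a::comm_semiring_1"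
  assumes "finite E"
  shows "(\<Sum>X\<in>Pow E. g (card X)) = (\<Sum>k\<le>card E. of_nat (card E choose k) * g k)"
proof -
  have "card ` Pow E \<subseteq> {..card E}"
    using assms by (auto intro: card_mono)
  then have "(\<Sum>X\<in>Pow E. g (card X)) = (\<Sum>k\<le>card E. \<Sum>X\<in>{X \<in> Pow E. card X = k}. g (card X))"
    using assms by (simp add: sum.group[of "Pow E" "{..card E}" card, symmetric])
  also have "\<dots> = (\<Sum>k\<le>card E. of_nat (card {X. X \<subseteq> E \<and> card X = k}) * g k)"
    by (intro sum.cong refl) simp
  finally show ?thesis
    using assms by (simp add: n_subsets)
qed

lemma sum_Pow_insert:
  assumes "finite E" and "e \<notin> E" and "\<A> \<subseteq> Pow E"
  shows "(\<Sum>X\<in>\<A> \<union> insert e ` Pow E. g X) = (\<Sum>X\<in>\<A>. g X) + (\<Sum>X\<in>Pow E. g (insert e X))"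
proof -
  have "inj_on (insert e) (Pow E)"
    using assms(2) by (intro inj_onI) (metis PowD insert_ident subsetD)
  moreover have "\<A> \<inter> insert e ` Pow E = {}"
    using assms(2,3) by auto
  moreover have "finite \<A>"
    using assms(1,3) finite_subset by blast
  ultimately show ?thesis
    using assms(1) by (simp add: sum.union_disjoint sum.reindex)
qed

definition lower_bounds :: "('a \<Rightarrow> 'b::linorder) \<Rightarrow> 'a set \<Rightarrow> 'a set \<Rightarrow> 'a set" where
  "lower_bounds key E X = {r \<in> E. \<forall>x\<in>X. key r \<le> key x}"

lemma lower_bounds_subset: "lower_bounds key E X \<subseteq> E"
  by (auto simp: lower_bounds_def)

lemma lower_bounds_insert_greatest:
  assumes "\<And>y. y \<in> E \<Longrightarrow> key y < key e" and "X \<noteq> {}" and "X \<subseteq> E"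
  shows "lower_bounds key (insert e E) X = lower_bounds key E X"
    and "lower_bounds key (insert e E) (insert e X) = lower_bounds key E X"
  using assms unfolding lower_bounds_def by (fastforce dest: leD intro: less_imp_le)+

lemma lower_bounds_greatest:
  assumes "\<And>y. y \<in> E \<Longrightarrow> key y < key e"
  shows "lower_bounds key (insert e E) {e} = insert e E"
  using assms unfolding lower_bounds_def by (auto intro: less_imp_le)

(* Induction removing the greatest element e: for X \<noteq> {} the set X \<union> lower_bounds key E X
   gains exactly e when e is added to X, and X = {e} gives the term f (Suc (card E)). *)
lemma sum_Pow_chain_balance:
  fixes key :: "'a \<Rightarrow> 'b::linorder" and f :: "nat \<Rightarrow> 'c::comm_monoid_add"
  assumes "finite E" and "inj_on key E"
  shows "(\<Sum>X\<in>Pow E. f (Suc (card X))) =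
    f (Suc (card E)) + (\<Sum>X\<in>Pow E - {{}}. f (card (X \<union> lower_bounds key E X)))"
  using assms
proof (induction E arbitrary: f rule: finite_ranking_induct[where f = key])
  case empty
  then show ?case by simp
next
  case (insert e E)
  show ?case
  proof (cases "e \<in> E")
    case True
    then show ?thesis
      using insert by (simp add: insert_absorb)
  next
    case False
    let ?lb = "lower_bounds key"
    have inj: "inj_on key E"
      using insert.prems by (simp add: inj_on_insert)
    have greatest: "key y < key e" if "y \<in> E" for y
      using insert.hyps(2)[OF that] insert.prems that False by (auto simp: inj_on_def order.order_iff_strict)
    have card_insert: "card (insert e X) = Suc (card X)" if "X \<subseteq> E" for X
      using insert.hyps(1) that False by (metis card_insert_disjoint finite_subset subsetD)
    have lb_subset: "X \<union> ?lb E X \<subseteq> E" if "X \<subseteq> E" for X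
      by (rule Un_least[OF that lower_bounds_subset])
    note lb_insert = lower_bounds_insert_greatest[of E key e, OF greatest]
    have "(\<Sum>X\<in>Pow (insert e E). f (Suc (card X))) =
        (\<Sum>X\<in>Pow E. f (Suc (card X))) + (\<Sum>X\<in>Pow E. f (Suc (card (insert e X))))"
      using sum_Pow_insert[OF insert.hyps(1) False order.refl] by (simp add: Pow_insert)
    also have "\<dots> = (\<Sum>X\<in>Pow E. f (Suc (card X))) + (\<Sum>X\<in>Pow E. f (Suc (Suc (card X))))"
      using card_insert by simp
    also have "\<dots> = f (Suc (card E)) + (\<Sum>X\<in>Pow E - {{}}. f (card (X \<union> ?lb E X)))
        + (f (Suc (Suc (card E))) + (\<Sum>X\<in>Pow E - {{}}. f (Suc (card (X \<union> ?lb E X)))))"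
      using insert.IH[OF inj, of f] insert.IH[OF inj, of "\<lambda>k. f (Suc k)"] by simp
    also have "\<dots> = f (Suc (card (insert e E))) +
        ((\<Sum>X\<in>Pow E - {{}}. f (card (X \<union> ?lb (insert e E) X)))
        + (\<Sum>X\<in>Pow E. f (card (insert e X \<union> ?lb (insert e E) (insert e X)))))"
    proof -
      have "(\<Sum>X\<in>Pow E. f (card (insert e X \<union> ?lb (insert e E) (insert e X)))) =
          f (card (insert e E)) + (\<Sum>X\<in>Pow E - {{}}. f (card (insert e X \<union> ?lb E X)))"
        using sum.remove[of "Pow E" "{}" "\<lambda>X. f (card (insert e X \<union> ?lb (insert e E) (insert e X)))"]
          insert.hyps(1) lb_insert(2) lower_bounds_greatest[of E key e, OF greatest] by simp
      then show ?thesis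
        using lb_insert(1) lb_subset card_insert by (simp add: ac_simps)
    qed
    also have "\<dots> = f (Suc (card (insert e E))) +
        (\<Sum>X\<in>Pow (insert e E) - {{}}. f (card (X \<union> ?lb (insert e E) X)))"
    proof -
      have "Pow (insert e E) - {{}} = (Pow E - {{}}) \<union> insert e ` Pow E"
        by (auto simp: Pow_insert)
      then show ?thesis
        using sum_Pow_insert[OF insert.hyps(1) False, of "Pow E - {{}}" "\<lambda>X. f (card (X \<union> ?lb (insert e E) X))"]
        by simp
    qed
    finally show ?thesis .
  qed
qed

type_synonym tableau = "step list \<times> (nat \<times> nat) set"

lemma is_typeB_tableau_iff:
  "is_typeB_tableau n (w, T) \<longleftrightarrow>
     length w = n \<and> T \<subseteq> tcells w \<and>
     (\<forall>c < n. w ! c = West \<longrightarrow> (\<exists>r. (r, c) \<in> T)) \<and>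
     (\<forall>r c. (r, c) \<in> tcells w \<longrightarrow> (r, c) \<notin> T \<longrightarrow>
         \<not> ((\<exists>r'. (r', c) \<in> T \<and> row_above w r' r) \<and> (\<exists>c'. (r, c') \<in> T \<and> c < c'))) \<and>
     (\<forall>c < n. w ! c = West \<longrightarrow> (c, c) \<notin> T \<longrightarrow> (\<forall>c'. (c, c') \<notin> T))"
  unfolding is_typeB_tableau_def col_left_def Let_def fst_conv snd_conv
  by (intro iffI; elim conjE; intro conjI; blast)

lemma mem_tcells: "(r, c) \<in> tcells w \<longleftrightarrow> c < length w \<and> w ! c = West \<and> r \<le> c"
  by (simp add: tcells_def)

lemma is_typeB_tableau_length: "is_typeB_tableau m (w, T) \<Longrightarrow> length w = m"
  by (simp add: is_typeB_tableau_iff)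

lemma is_typeB_tableau_cell:
  "is_typeB_tableau m (w, T) \<Longrightarrow> (r, c) \<in> T \<Longrightarrow> r \<le> c \<and> c < m \<and> w ! c = West"
  unfolding is_typeB_tableau_iff by (auto simp: mem_tcells)

lemma row_above_append:
  "a < length w \<Longrightarrow> b < length w \<Longrightarrow> row_above (w @ [s]) a b \<longleftrightarrow> row_above w a b"
  by (simp add: row_above_def nth_append)

lemma finite_typeB_tableaux: "finite (typeB_tableaux n)"
proof (rule finite_subset)
  show "typeB_tableaux n \<subseteq> {w. set w \<subseteq> UNIV \<and> length w = n} \<times> Pow ({..<n} \<times> {..<n})"
  proof
    fix t assume "t \<in> typeB_tableaux n"
    then obtain w T where t: "t = (w, T)" and "is_typeB_tableau n (w, T)"
      by (cases t) (auto simp: typeB_tableaux_def)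
    then show "t \<in> {w. set w \<subseteq> UNIV \<and> length w = n} \<times> Pow ({..<n} \<times> {..<n})"
      using is_typeB_tableau_length is_typeB_tableau_cell by fastforce
  qed
  have "finite (UNIV :: step set)"
    by (metis finite.emptyI finite.insertI finite_subset step.exhaust subsetI insertCI)
  then have "finite {w. set w \<subseteq> (UNIV :: step set) \<and> length w = n}"
    by (rule finite_lists_length_eq)
  then show "finite ({w. set w \<subseteq> (UNIV :: step set) \<and> length w = n} \<times> Pow ({..<n} \<times> {..<n}))"
    by simp
qed

lemma all_South_in_typeB_tableaux: "(replicate n South, {}) \<in> typeB_tableaux n"
  by (simp add: typeB_tableaux_def is_typeB_tableau_iff mem_tcells)

definition take_tableau :: "nat \<Rightarrow> tableau \<Rightarrow> tableau" where
  "take_tableau m t = (take m (fst t), {x \<in> snd t. snd x < m})"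

lemma take_tableau_take_tableau: "m \<le> m' \<Longrightarrow> take_tableau m (take_tableau m' t) = take_tableau m t"
  unfolding take_tableau_def by (auto simp: min_def)

lemma take_tableau_self:
  assumes "is_typeB_tableau m t"
  shows "take_tableau m t = t"
proof -
  obtain w T where t: "t = (w, T)"
    by (cases t)
  have "{x \<in> T. snd x < m} = T"
    using assms is_typeB_tableau_cell unfolding t by fastforce
  then show ?thesis
    using assms is_typeB_tableau_length unfolding t take_tableau_def by fastforce
qed

lemma is_typeB_tableau_take_tableau:
  assumes "is_typeB_tableau n t" and "m \<le> n"
  shows "is_typeB_tableau m (take_tableau m t)"
proof -
  obtain w T where t: "t = (w, T)"
    by (cases t)
  have L: "length w = n" and TT: "T \<subseteq> tcells w"
    and C1: "\<forall>c < n. w ! c = West \<longrightarrow> (\<exists>r. (r, c) \<in> T)"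
    and C2: "\<forall>r c. (r, c) \<in> tcells w \<longrightarrow> (r, c) \<notin> T \<longrightarrow>
           \<not> ((\<exists>r'. (r', c) \<in> T \<and> row_above w r' r) \<and> (\<exists>c'. (r, c') \<in> T \<and> c < c'))"
    and C3: "\<forall>c < n. w ! c = West \<longrightarrow> (c, c) \<notin> T \<longrightarrow> (\<forall>c'. (c, c') \<notin> T)"
    using assms(1) unfolding t is_typeB_tableau_iff by blast+
  have tcells_take: "(r, c) \<in> tcells (take m w) \<longleftrightarrow> (r, c) \<in> tcells w \<and> c < m" for r c
    by (auto simp: mem_tcells)
  have row_above_take: "a < m \<Longrightarrow> b < m \<Longrightarrow> row_above (take m w) a b \<longleftrightarrow> row_above w a b" for a b
    by (simp add: row_above_def)
  let ?T = "{x \<in> T. snd x < m}"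
  have "is_typeB_tableau m (take m w, ?T)"
    unfolding is_typeB_tableau_iff
  proof (intro conjI allI impI)
    show "length (take m w) = m"
      using L assms(2) by simp
    show "?T \<subseteq> tcells (take m w)"
      using TT by (auto simp: tcells_take)
  next
    fix c assume "c < m" "take m w ! c = West"
    then show "\<exists>r. (r, c) \<in> ?T"
      using C1 assms(2) by fastforce
  next
    fix r c assume "(r, c) \<in> tcells (take m w)" "(r, c) \<notin> ?T"
    then have rc: "(r, c) \<in> tcells w" "c < m" "(r, c) \<notin> T"
      by (auto simp: tcells_take)
    show "\<not> ((\<exists>r'. (r', c) \<in> ?T \<and> row_above (take m w) r' r) \<and> (\<exists>c'. (r, c') \<in> ?T \<and> c < c'))"
    proof
      assume "(\<exists>r'. (r', c) \<in> ?T \<and> row_above (take m w) r' r) \<and> (\<exists>c'. (r, c') \<in> ?T \<and> c < c')"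
      then obtain r' c' where "(r', c) \<in> T" "row_above (take m w) r' r" "(r, c') \<in> T" "c < c'"
        by auto
      moreover have "r' \<le> c" "r \<le> c"
        using \<open>(r', c) \<in> T\<close> TT rc(1) by (auto simp: mem_tcells)
      ultimately show False
        using C2 rc row_above_take[of r' r] by auto
    qed
  next
    fix c c' assume "c < m" "take m w ! c = West" "(c, c) \<notin> ?T"
    then show "(c, c') \<notin> ?T"
      using C3 assms(2) by auto
  qed
  then show ?thesis
    by (simp add: t take_tableau_def)
qed

(* The rows in which a new column, appended at the left by a west step, may carry a 1:
   by (3) a west row needs a 1 on its diagonal, and by (2) no 0 of the row may have a 1 above it. *)
definition free_rows :: "step list \<Rightarrow> (nat \<times> nat) set \<Rightarrow> nat set" where
  "free_rows w T = {r. r < length w \<and> (w ! r = West \<longrightarrow> (r, r) \<in> T) \<and>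
      (\<forall>c r'. (r, c) \<in> tcells w \<longrightarrow> (r, c) \<notin> T \<longrightarrow> (r', c) \<in> T \<longrightarrow> \<not> row_above w r' r)}"

definition add_west :: "step list \<Rightarrow> (nat \<times> nat) set \<Rightarrow> bool \<Rightarrow> nat set \<Rightarrow> tableau" where
  "add_west w T d X = (w @ [West], T \<union> X \<times> {length w} \<union> (if d then {(length w, length w)} else {}))"

definition extensions :: "step list \<Rightarrow> (nat \<times> nat) set \<Rightarrow> tableau set" where
  "extensions w T = insert (w @ [South], T)
     (add_west w T True ` Pow (free_rows w T) \<union> add_west w T False ` (Pow (free_rows w T) - {{}}))"

lemma free_rows_less: "r \<in> free_rows w T \<Longrightarrow> r < length w"
  by (simp add: free_rows_def)

lemma finite_free_rows: "finite (free_rows w T)"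
  by (rule finite_subset[of _ "{..<length w}"]) (auto dest: free_rows_less)

lemma is_typeB_tableau_add_South:
  assumes "is_typeB_tableau m (w, T)"
  shows "is_typeB_tableau (Suc m) (w @ [South], T)"
proof -
  have L: "length w = m" and TT: "T \<subseteq> tcells w"
    and C1: "\<forall>c < m. w ! c = West \<longrightarrow> (\<exists>r. (r, c) \<in> T)"
    and C2: "\<forall>r c. (r, c) \<in> tcells w \<longrightarrow> (r, c) \<notin> T \<longrightarrow>
           \<not> ((\<exists>r'. (r', c) \<in> T \<and> row_above w r' r) \<and> (\<exists>c'. (r, c') \<in> T \<and> c < c'))"
    and C3: "\<forall>c < m. w ! c = West \<longrightarrow> (c, c) \<notin> T \<longrightarrow> (\<forall>c'. (c, c') \<notin> T)"
    using assms unfolding is_typeB_tableau_iff by blast+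
  have tc: "tcells (w @ [South]) = tcells w"
    by (auto simp: mem_tcells nth_append less_Suc_eq)
  have west: "c < m \<and> w ! c = West" if "c < Suc m" "(w @ [South]) ! c = West" for c
    using that L by (auto simp: nth_append less_Suc_eq)
  show ?thesis
    unfolding is_typeB_tableau_iff tc
  proof (intro conjI allI impI)
    show "length (w @ [South]) = Suc m"
      using L by simp
  next
    fix r c assume rc: "(r, c) \<in> tcells w" "(r, c) \<notin> T"
    show "\<not> ((\<exists>r'. (r', c) \<in> T \<and> row_above (w @ [South]) r' r) \<and> (\<exists>c'. (r, c') \<in> T \<and> c < c'))"
    proof
      assume "(\<exists>r'. (r', c) \<in> T \<and> row_above (w @ [South]) r' r) \<and> (\<exists>c'. (r, c') \<in> T \<and> c < c')"
      then obtain r' c' where "(r', c) \<in> T" "row_above (w @ [South]) r' r" "(r, c') \<in> T" "c < c'"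
        by auto
      moreover have "r' < length w" "r < length w"
        using \<open>(r', c) \<in> T\<close> TT rc by (auto simp: mem_tcells)
      ultimately show False
        using C2 rc row_above_append[of r' w r South] by auto
    qed
  qed (use TT C1 C3 west in blast)+
qed

lemma is_typeB_tableau_add_west:
  assumes "is_typeB_tableau m (w, T)" and "X \<subseteq> free_rows w T" and "d \<or> X \<noteq> {}"
  shows "is_typeB_tableau (Suc m) (add_west w T d X)"
proof -
  have L: "length w = m" and TT: "T \<subseteq> tcells w"
    and C1: "\<forall>c < m. w ! c = West \<longrightarrow> (\<exists>r. (r, c) \<in> T)"
    and C2: "\<forall>r c. (r, c) \<in> tcells w \<longrightarrow> (r, c) \<notin> T \<longrightarrow>
           \<not> ((\<exists>r'. (r', c) \<in> T \<and> row_above w r' r) \<and> (\<exists>c'. (r, c') \<in> T \<and> c < c'))"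
    and C3: "\<forall>c < m. w ! c = West \<longrightarrow> (c, c) \<notin> T \<longrightarrow> (\<forall>c'. (c, c') \<notin> T)"
    using assms(1) unfolding is_typeB_tableau_iff by blast+
  define T1 where "T1 = T \<union> X \<times> {m} \<union> (if d then {(m, m)} else {})"
  have Tc: "(r, c) \<in> T \<Longrightarrow> r \<le> c \<and> c < m \<and> w ! c = West" for r c
    using is_typeB_tableau_cell[OF assms(1)] .
  have Xfree: "x < m \<and> (w ! x = West \<longrightarrow> (x, x) \<in> T) \<and>
      (\<forall>c r'. (x, c) \<in> tcells w \<longrightarrow> (x, c) \<notin> T \<longrightarrow> (r', c) \<in> T \<longrightarrow> \<not> row_above w r' x)" if "x \<in> X" for x
    using assms(2) that L unfolding free_rows_def by blast
  have T1: "(r, c) \<in> T1 \<longleftrightarrow> (if c < m then (r, c) \<in> T else c = m \<and> (r \<in> X \<or> d \<and> r = m))" for r c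
    using Tc Xfree unfolding T1_def by (cases "c < m") auto
  have nth: "c < m \<Longrightarrow> (w @ [West]) ! c = w ! c" for c
    using L by (simp add: nth_append)
  have tc: "(r, c) \<in> tcells (w @ [West]) \<longleftrightarrow> (if c < m then (r, c) \<in> tcells w else c = m \<and> r \<le> m)" for r c
    using L by (auto simp: mem_tcells nth_append)
  have "is_typeB_tableau (Suc m) (w @ [West], T1)"
    unfolding is_typeB_tableau_iff
  proof (intro conjI allI impI subsetI)
    show "length (w @ [West]) = Suc m"
      using L by simp
  next
    fix x assume "x \<in> T1"
    moreover obtain r c where x: "x = (r, c)"
      by (cases x)
    ultimately show "x \<in> tcells (w @ [West])"
      using TT Xfree[of r] by (cases "c < m") (auto simp: T1 tc)
  next
    fix c assume "c < Suc m" "(w @ [West]) ! c = West"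
    show "\<exists>r. (r, c) \<in> T1"
    proof (cases "c < m")
      case True
      then show ?thesis
        using C1 nth[OF True] \<open>(w @ [West]) ! c = West\<close> by (auto simp: T1)
    next
      case False
      then show ?thesis
        using assms(3) \<open>c < Suc m\<close> by (auto simp: T1)
    qed
  next
    fix r c assume rc: "(r, c) \<in> tcells (w @ [West])" "(r, c) \<notin> T1"
    show "\<not> ((\<exists>r'. (r', c) \<in> T1 \<and> row_above (w @ [West]) r' r) \<and> (\<exists>c'. (r, c') \<in> T1 \<and> c < c'))"
    proof
      assume "(\<exists>r'. (r', c) \<in> T1 \<and> row_above (w @ [West]) r' r) \<and> (\<exists>c'. (r, c') \<in> T1 \<and> c < c')"
      then obtain r' c' where h: "(r', c) \<in> T1" "row_above (w @ [West]) r' r" "(r, c') \<in> T1" "c < c'"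
        by auto
      then have "c < m"
        using rc(1) by (auto simp: T1 tc split: if_splits)
      then have old: "(r, c) \<in> tcells w" "(r, c) \<notin> T" "(r', c) \<in> T"
        using rc h by (auto simp: T1 tc)
      moreover have "r \<le> c"
        using old(1) by (simp add: mem_tcells)
      ultimately have "row_above w r' r"
        using h(2) row_above_append[of r' w r West] Tc[of r' c] L \<open>c < m\<close> by auto
      show False
      proof (cases "c' < m")
        case True
        then have "(r, c') \<in> T"
          using h(3) by (simp add: T1)
        then show False
          using C2 old h(4) \<open>row_above w r' r\<close> by blast
      next
        case False
        then have "r \<in> X"
          using h(3) \<open>c < m\<close> \<open>r \<le> c\<close> by (auto simp: T1)
        then show False
          using Xfree old \<open>row_above w r' r\<close> by blast
      qed
    qed
  next
    fix c c' assume c: "c < Suc m" "(w @ [West]) ! c = West" "(c, c) \<notin> T1"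
    show "(c, c') \<notin> T1"
    proof (cases "c < m")
      case True
      then have "w ! c = West" "(c, c) \<notin> T"
        using c nth by (auto simp: T1)
      then show ?thesis
        using C3 True Xfree[of c] by (auto simp: T1)
    next
      case False
      then have "c = m" "\<not> d"
        using c by (auto simp: T1)
      then show ?thesis
        using Xfree[of m] Tc[of m c'] by (auto simp: T1)
    qed
  qed
  then show ?thesis
    unfolding add_west_def L T1_def .
qed

lemma take_tableau_append:
  assumes "is_typeB_tableau m (w, T)" and "\<forall>x\<in>U. snd x = m"
  shows "take_tableau m (w @ [s], T \<union> U) = (w, T)"
proof -
  have "{x \<in> T \<union> U. snd x < m} = {x \<in> T. snd x < m}"
    using assms(2) by auto
  then show ?thesis
    using take_tableau_self[OF assms(1)] is_typeB_tableau_length[OF assms(1)]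
    by (simp add: take_tableau_def)
qed

lemma take_tableau_add_South: "is_typeB_tableau m (w, T) \<Longrightarrow> take_tableau m (w @ [South], T) = (w, T)"
  using take_tableau_append[of m w T "{}"] by simp

lemma take_tableau_add_west:
  assumes "is_typeB_tableau m (w, T)"
  shows "take_tableau m (add_west w T d X) = (w, T)"
proof -
  have "add_west w T d X = (w @ [West], T \<union> (X \<times> {m} \<union> (if d then {(m, m)} else {})))"
    using is_typeB_tableau_length[OF assms] by (simp add: add_west_def Un_assoc)
  then show ?thesis
    using take_tableau_append[OF assms, of "X \<times> {m} \<union> (if d then {(m, m)} else {})" West] by simp
qed

lemma mem_extensionsD:
  assumes "is_typeB_tableau m (w, T)" and "t1 \<in> extensions w T"
  shows "is_typeB_tableau (Suc m) t1 \<and> take_tableau m t1 = (w, T)"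
proof -
  consider "t1 = (w @ [South], T)"
    | d X where "t1 = add_west w T d X" "X \<subseteq> free_rows w T" "d \<or> X \<noteq> {}"
    using assms(2) unfolding extensions_def by blast
  then show ?thesis
  proof cases
    case 1
    then show ?thesis
      using is_typeB_tableau_add_South[OF assms(1)] take_tableau_add_South[OF assms(1)] by simp
  next
    case 2
    then show ?thesis
      using is_typeB_tableau_add_west[OF assms(1)] take_tableau_add_west[OF assms(1)] by simp
  qed
qed

lemma new_column_row_free:
  assumes "is_typeB_tableau m (w, T)" and "is_typeB_tableau (Suc m) (w @ [s], T1)"
    and "{x \<in> T1. snd x < m} = T" and "r < m" and "(r, m) \<in> T1"
  shows "r \<in> free_rows w T"
proof -
  have L: "length w = m"
    using is_typeB_tableau_length[OF assms(1)] .
  have C2: "\<forall>r c. (r, c) \<in> tcells (w @ [s]) \<longrightarrow> (r, c) \<notin> T1 \<longrightarrow>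
           \<not> ((\<exists>r'. (r', c) \<in> T1 \<and> row_above (w @ [s]) r' r) \<and> (\<exists>c'. (r, c') \<in> T1 \<and> c < c'))"
    and C3: "\<forall>c < Suc m. (w @ [s]) ! c = West \<longrightarrow> (c, c) \<notin> T1 \<longrightarrow> (\<forall>c'. (c, c') \<notin> T1)"
    using assms(2) unfolding is_typeB_tableau_iff by blast+
  have "w ! r = West \<longrightarrow> (r, r) \<in> T"
    using C3 assms(3-5) L by (auto simp: nth_append)
  moreover have "\<not> row_above w r' r"
    if "(r, c) \<in> tcells w" "(r, c) \<notin> T" "(r', c) \<in> T" for c r'
  proof
    assume above: "row_above w r' r"
    have "c < m" "r' \<le> c"
      using that(1,3) is_typeB_tableau_cell[OF assms(1)] by (auto simp: mem_tcells L)
    then have "(r, c) \<in> tcells (w @ [s])" "(r, c) \<notin> T1" "(r', c) \<in> T1"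
      "row_above (w @ [s]) r' r"
      using that above assms(3,4) L by (auto simp: mem_tcells nth_append row_above_append)
    then show False
      using C2 assms(5) \<open>c < m\<close> by blast
  qed
  ultimately show ?thesis
    using assms(4) L by (simp add: free_rows_def)
qed

lemma mem_extensionsI:
  assumes "is_typeB_tableau m (w, T)" and "is_typeB_tableau (Suc m) t1" and "take_tableau m t1 = (w, T)"
  shows "t1 \<in> extensions w T"
proof -
  obtain w1 T1 where t1: "t1 = (w1, T1)"
    by (cases t1)
  have L: "length w = m"
    using is_typeB_tableau_length[OF assms(1)] .
  have "length w1 = Suc m" and T: "{x \<in> T1. snd x < m} = T"
    using assms(2,3) is_typeB_tableau_length unfolding t1 take_tableau_def by auto
  moreover have "take m w1 = w"
    using assms(3) unfolding t1 take_tableau_def by simp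
  ultimately have "w1 = w @ [w1 ! m]"
    using take_Suc_conv_app_nth[of m w1] by simp
  then obtain s where w1: "w1 = w @ [s]"
    by blast
  have valid1: "is_typeB_tableau (Suc m) (w @ [s], T1)"
    using assms(2) t1 w1 by simp
  have cell: "r \<le> c \<and> c < Suc m \<and> (w @ [s]) ! c = West" if "(r, c) \<in> T1" for r c
    using is_typeB_tableau_cell[OF valid1 that] .
  show ?thesis
  proof (cases s)
    case South
    have "c < m" if "(r, c) \<in> T1" for r c
      using cell[OF that] South L by (auto simp: nth_append less_Suc_eq)
    then have "T1 = T"
      using T by (auto simp: split_paired_all)
    then show ?thesis
      using t1 w1 South by (simp add: extensions_def)
  next
    case West
    define X where "X = {r. r < m \<and> (r, m) \<in> T1}"
    define d where "d = ((m, m) \<in> T1)"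
    have "(r, c) \<in> T1 \<longleftrightarrow> (r, c) \<in> T \<union> X \<times> {m} \<union> (if d then {(m, m)} else {})" for r c
      using T cell[of r c] unfolding X_def d_def by (cases "c < m") (auto simp: le_less less_Suc_eq)
    then have "T1 = T \<union> X \<times> {m} \<union> (if d then {(m, m)} else {})"
      by auto
    then have t1_eq: "t1 = add_west w T d X"
      using t1 w1 West L by (simp add: add_west_def)
    have "X \<subseteq> free_rows w T"
      using new_column_row_free[OF assms(1) valid1 T] unfolding X_def by blast
    moreover have "d \<or> X \<noteq> {}"
    proof -
      obtain r where "(r, m) \<in> T1"
        using valid1 West L unfolding is_typeB_tableau_iff by (auto simp: nth_append)
      then show ?thesis
        using cell[of r m] unfolding X_def d_def by (cases "r = m") auto
    qed
    ultimately show ?thesis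
      unfolding t1_eq extensions_def by (cases d) auto
  qed
qed

lemma typeB_tableaux_fibre_eq_extensions:
  "is_typeB_tableau m (w, T) \<Longrightarrow>
    {t1 \<in> typeB_tableaux (Suc m). take_tableau m t1 = (w, T)} = extensions w T"
  using mem_extensionsD mem_extensionsI unfolding typeB_tableaux_def by blast

definition row_depth :: "step list \<Rightarrow> nat \<Rightarrow> int" where
  "row_depth w r = (if w ! r = West then - int r - 1 else int r)"

lemma row_above_iff_row_depth: "row_above w a b \<longleftrightarrow> row_depth w a < row_depth w b"
  by (cases "w ! a"; cases "w ! b") (auto simp: row_above_def row_depth_def)

lemma inj_row_depth: "inj_on (row_depth w) A"
  by (rule inj_onI) (auto simp: row_depth_def split: if_splits)

lemma free_rows_append:
  assumes "is_typeB_tableau m (w, T)" and "is_typeB_tableau (Suc m) (w @ [s], T1)"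
    and T: "{x \<in> T1. snd x < m} = T" and "r < m"
  shows "r \<in> free_rows (w @ [s]) T1 \<longleftrightarrow> r \<in> free_rows w T \<and>
     (s = West \<longrightarrow> (r, m) \<in> T1 \<or> (\<forall>r'. (r', m) \<in> T1 \<longrightarrow> \<not> row_above (w @ [s]) r' r))"
proof -
  have L: "length w = m"
    using is_typeB_tableau_length[OF assms(1)] .
  have T_old: "c < m \<Longrightarrow> (x, c) \<in> T1 \<longleftrightarrow> (x, c) \<in> T" for x c
    using T by auto
  have T1_cell: "(x, c) \<in> T1 \<Longrightarrow> x \<le> c" for x c
    using is_typeB_tableau_cell[OF assms(2)] by blast
  have tc: "(r, c) \<in> tcells (w @ [s]) \<longleftrightarrow> (r, c) \<in> tcells w \<or> (c = m \<and> s = West)" for c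
    using assms(4) L by (auto simp: mem_tcells nth_append less_Suc_eq)
  have above: "row_above (w @ [s]) x r \<longleftrightarrow> row_above w x r" if "x \<le> c" "c < m" for x c
    using row_above_append[of x w r s] that assms(4) L by simp
  have tcm: "(r, c) \<in> tcells w \<Longrightarrow> c < m" for c
    using L by (simp add: mem_tcells)
  let ?ok = "\<lambda>w T c. \<forall>r'. (r, c) \<in> tcells w \<longrightarrow> (r, c) \<notin> T \<longrightarrow> (r', c) \<in> T \<longrightarrow> \<not> row_above w r' r"
  have old: "?ok (w @ [s]) T1 c \<longleftrightarrow> ?ok w T c" if "c < m" for c
  proof -
    have "(r, c) \<in> tcells (w @ [s]) \<longleftrightarrow> (r, c) \<in> tcells w"
      using tc that by auto
    moreover have "(r', c) \<in> T1 \<and> row_above (w @ [s]) r' r \<longleftrightarrow> (r', c) \<in> T \<and> row_above w r' r" for r'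
      using T_old[OF that, of r'] above[OF _ that, of r'] T1_cell[of r' c] by blast
    ultimately show ?thesis
      using T_old[OF that, of r] by blast
  qed
  have new: "?ok (w @ [s]) T1 m \<longleftrightarrow>
      (s = West \<longrightarrow> (r, m) \<in> T1 \<or> (\<forall>r'. (r', m) \<in> T1 \<longrightarrow> \<not> row_above (w @ [s]) r' r))"
    using tc tcm by auto
  have beyond_new: "?ok (w @ [s]) T1 c" if "m < c" for c
    using tc[of c] tcm[of c] that by auto
  have beyond_old: "?ok w T c" if "m \<le> c" for c
    using tcm[of c] that by auto
  have split: "(\<forall>c. P c) \<longleftrightarrow> (\<forall>c<m. P c) \<and> P m \<and> (\<forall>c>m. P c)" for P
    by (metis linorder_neqE_nat)
  have "(\<forall>c. ?ok (w @ [s]) T1 c) \<longleftrightarrow> (\<forall>c<m. ?ok (w @ [s]) T1 c) \<and> ?ok (w @ [s]) T1 m"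
    using split[of "?ok (w @ [s]) T1"] beyond_new by blast
  also have "\<dots> \<longleftrightarrow> (\<forall>c. ?ok w T c) \<and> ?ok (w @ [s]) T1 m"
    using old beyond_old by (meson not_le)
  finally have "(\<forall>c. ?ok (w @ [s]) T1 c) \<longleftrightarrow> (\<forall>c. ?ok w T c) \<and> ?ok (w @ [s]) T1 m" .
  moreover have "(w @ [s]) ! r = w ! r" "(r, r) \<in> T1 \<longleftrightarrow> (r, r) \<in> T"
    using assms(4) L T_old by (auto simp: nth_append)
  ultimately show ?thesis
    unfolding free_rows_def new[symmetric] using assms(4) L by auto
qed

lemma free_rows_add_South:
  assumes "is_typeB_tableau m (w, T)"
  shows "free_rows (w @ [South]) T = insert m (free_rows w T)"
proof (rule set_eqI)
  fix r
  have L: "length w = m"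
    using is_typeB_tableau_length[OF assms] .
  have T: "{x \<in> T. snd x < m} = T"
    using take_tableau_self[OF assms] by (simp add: take_tableau_def)
  consider "r < m" | "r = m" | "m < r"
    by linarith
  then show "r \<in> free_rows (w @ [South]) T \<longleftrightarrow> r \<in> insert m (free_rows w T)"
  proof cases
    case 1
    then show ?thesis
      using free_rows_append[OF assms is_typeB_tableau_add_South[OF assms] T] by simp
  next
    case 2
    then show ?thesis
      using L by (auto simp: free_rows_def mem_tcells nth_append)
  next
    case 3
    then show ?thesis
      using L by (auto dest: free_rows_less)
  qed
qed

lemma free_rows_add_west:
  assumes "is_typeB_tableau m (w, T)" and X: "X \<subseteq> free_rows w T" and "d \<or> X \<noteq> {}"
  shows "case_prod free_rows (add_west w T d X) =
    (if d then insert m X else X \<union> lower_bounds (row_depth w) (free_rows w T) X)"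
proof -
  have L: "length w = m"
    using is_typeB_tableau_length[OF assms(1)] .
  define T1 where "T1 = T \<union> X \<times> {m} \<union> (if d then {(m, m)} else {})"
  have t1: "add_west w T d X = (w @ [West], T1)"
    using L by (simp add: add_west_def T1_def)
  have valid1: "is_typeB_tableau (Suc m) (w @ [West], T1)"
    using is_typeB_tableau_add_west[OF assms] t1 by simp
  have T: "{x \<in> T1. snd x < m} = T"
    using take_tableau_add_west[OF assms(1), of d X] t1 by (simp add: take_tableau_def)
  have Xm: "x < m" if "x \<in> X" for x
    using X that free_rows_less L by blast
  have col_m: "(x, m) \<in> T1 \<longleftrightarrow> x \<in> X \<or> (d \<and> x = m)" for x
    using is_typeB_tableau_cell[OF assms(1), of x m] unfolding T1_def by auto
  have above_X: "row_above (w @ [West]) x r \<longleftrightarrow> \<not> row_depth w r \<le> row_depth w x"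
    if "x \<in> X" "r < m" for x r
    using row_above_append[of x w r West] Xm[OF that(1)] that(2) L
    by (simp add: row_above_iff_row_depth not_le)
  have above_m: "row_above (w @ [West]) m r" if "r < m" for r
    using that L by (cases "w ! r") (simp_all add: row_above_def nth_append)
  have "r \<in> free_rows (w @ [West]) T1 \<longleftrightarrow>
       r \<in> (if d then insert m X else X \<union> lower_bounds (row_depth w) (free_rows w T) X)" for r
  proof -
    consider "r < m" | "r = m" | "m < r"
      by linarith
    then show ?thesis
    proof cases
      case 1
      then show ?thesis
        using free_rows_append[OF assms(1) valid1 T 1] col_m above_X[OF _ 1] above_m[OF 1] X
        by (cases d) (auto simp: lower_bounds_def)
    next
      case 2
      have "m \<in> free_rows (w @ [West]) T1 \<longleftrightarrow> (m, m) \<in> T1"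
        using L by (auto simp: free_rows_def nth_append mem_tcells less_Suc_eq)
      moreover have "m \<notin> free_rows w T"
        using free_rows_less[of m w T] L by auto
      then have "m \<notin> lower_bounds (row_depth w) (free_rows w T) X"
        by (rule contra_subsetD[OF lower_bounds_subset])
      ultimately show ?thesis
        using 2 col_m Xm by auto
    next
      case 3
      then have "r \<notin> X" "r \<noteq> m" "r \<notin> free_rows w T" "r \<notin> free_rows (w @ [West]) T1"
        using L Xm less_asym free_rows_less by fastforce+
      moreover have "r \<notin> lower_bounds (row_depth w) (free_rows w T) X"
        by (rule contra_subsetD[OF lower_bounds_subset \<open>r \<notin> free_rows w T\<close>])
      ultimately show ?thesis
        by simp
    qed
  qed
  then show ?thesis
    unfolding t1 prod.case by (rule set_eqI)
qed

lemma add_west_new_column: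
  assumes "is_typeB_tableau m (w, T)" and "X \<subseteq> free_rows w T"
  shows "{r. r < m \<and> (r, m) \<in> snd (add_west w T d X)} = X"
    and "(m, m) \<in> snd (add_west w T d X) \<longleftrightarrow> d"
proof -
  have L: "length w = m"
    using is_typeB_tableau_length[OF assms(1)] .
  have "(r, m) \<notin> T" for r
    using is_typeB_tableau_cell[OF assms(1), of r m] by auto
  moreover have "X \<subseteq> {..<m}"
    using assms(2) free_rows_less L by auto
  ultimately show "{r. r < m \<and> (r, m) \<in> snd (add_west w T d X)} = X"
    and "(m, m) \<in> snd (add_west w T d X) \<longleftrightarrow> d"
    by (auto simp: add_west_def L)
qed

lemma inj_on_add_west:
  assumes "is_typeB_tableau m (w, T)"
  shows "inj_on (add_west w T d) (Pow (free_rows w T))"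
  by (rule inj_onI) (metis PowD add_west_new_column(1)[OF assms])

definition west_diagonal_one :: "nat \<Rightarrow> tableau \<Rightarrow> bool" where
  "west_diagonal_one p t \<longleftrightarrow> fst t ! p = West \<and> (p, p) \<in> snd t"

lemma west_diagonal_one_add_west:
  assumes "is_typeB_tableau m (w, T)" and "X \<subseteq> free_rows w T"
  shows "west_diagonal_one m (add_west w T d X) \<longleftrightarrow> d"
proof -
  have "fst (add_west w T d X) ! m = West"
    using is_typeB_tableau_length[OF assms(1)] by (simp add: add_west_def nth_append)
  then show ?thesis
    using add_west_new_column(2)[OF assms] by (simp add: west_diagonal_one_def)
qed

lemma west_diagonal_one_take_tableau:
  "p < n \<Longrightarrow> west_diagonal_one p (take_tableau n t) \<longleftrightarrow> west_diagonal_one p t"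
  by (simp add: west_diagonal_one_def take_tableau_def)

lemma extensions_west_diagonal_one:
  assumes "is_typeB_tableau m (w, T)"
  shows "{t1 \<in> extensions w T. west_diagonal_one m t1} = add_west w T True ` Pow (free_rows w T)"
    and "{t1 \<in> extensions w T. \<not> west_diagonal_one m t1} =
      insert (w @ [South], T) (add_west w T False ` (Pow (free_rows w T) - {{}}))"
proof -
  have "\<not> west_diagonal_one m (w @ [South], T)"
    using is_typeB_tableau_length[OF assms, symmetric] by (simp add: west_diagonal_one_def)
  then show "{t1 \<in> extensions w T. west_diagonal_one m t1} = add_west w T True ` Pow (free_rows w T)"
    and "{t1 \<in> extensions w T. \<not> west_diagonal_one m t1} =
      insert (w @ [South], T) (add_west w T False ` (Pow (free_rows w T) - {{}}))"
    using west_diagonal_one_add_west[OF assms] unfolding extensions_def by auto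
qed

lemma sum_extensions_west_diagonal_one:
  assumes "is_typeB_tableau m (w, T)"
  shows "(\<Sum>t1\<in>{t1 \<in> extensions w T. west_diagonal_one m t1}. f (card (case_prod free_rows t1))) =
    (\<Sum>X\<in>Pow (free_rows w T). f (Suc (card X)))"
proof -
  have "card (case_prod free_rows (add_west w T True X)) = Suc (card X)" if "X \<subseteq> free_rows w T" for X
  proof -
    have "m \<notin> X" "finite X"
      using that free_rows_less finite_free_rows is_typeB_tableau_length[OF assms]
      by (auto intro: finite_subset)
    then show ?thesis
      using free_rows_add_west[OF assms that] by simp
  qed
  then show ?thesis
    unfolding extensions_west_diagonal_one(1)[OF assms]
    by (simp add: sum.reindex[OF inj_on_add_west[OF assms]])
qed

lemma sum_extensions_not_west_diagonal_one:
  assumes "is_typeB_tableau m (w, T)"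
  shows "(\<Sum>t1\<in>{t1 \<in> extensions w T. \<not> west_diagonal_one m t1}. f (card (case_prod free_rows t1))) =
    f (Suc (card (free_rows w T))) + (\<Sum>X\<in>Pow (free_rows w T) - {{}}.
      f (card (X \<union> lower_bounds (row_depth w) (free_rows w T) X)))"
proof -
  have "(w @ [South], T) \<notin> add_west w T False ` (Pow (free_rows w T) - {{}})"
    by (auto simp: add_west_def)
  moreover have "card (free_rows (w @ [South]) T) = Suc (card (free_rows w T))"
    using free_rows_add_South[OF assms] free_rows_less finite_free_rows is_typeB_tableau_length[OF assms]
    by (metis card_insert_disjoint less_irrefl)
  moreover have "case_prod free_rows (add_west w T False X) =
      X \<union> lower_bounds (row_depth w) (free_rows w T) X"
    if "X \<in> Pow (free_rows w T) - {{}}" for X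
    using that free_rows_add_west[OF assms] by simp
  ultimately show ?thesis
    unfolding extensions_west_diagonal_one(2)[OF assms]
    by (simp add: finite_free_rows sum.reindex inj_on_subset[OF inj_on_add_west[OF assms]])
qed

lemma sum_extensions_balanced:
  assumes "is_typeB_tableau m (w, T)"
  shows "(\<Sum>t1\<in>{t1 \<in> extensions w T. west_diagonal_one m t1}. f (card (case_prod free_rows t1))) =
    (\<Sum>t1\<in>{t1 \<in> extensions w T. \<not> west_diagonal_one m t1}. f (card (case_prod free_rows t1)))"
  unfolding sum_extensions_west_diagonal_one[OF assms] sum_extensions_not_west_diagonal_one[OF assms]
  by (rule sum_Pow_chain_balance[OF finite_free_rows inj_row_depth])

lemma sum_extensions:
  fixes f :: "nat \<Rightarrow> nat"
  assumes "is_typeB_tableau m (w, T)"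
  shows "(\<Sum>t1\<in>extensions w T. f (card (case_prod free_rows t1))) =
    2 * (\<Sum>k\<le>card (free_rows w T). (card (free_rows w T) choose k) * f (Suc k))"
proof -
  let ?g = "\<lambda>t1. f (card (case_prod free_rows t1))"
  let ?E = "{t1 \<in> extensions w T. west_diagonal_one m t1}"
  let ?N = "{t1 \<in> extensions w T. \<not> west_diagonal_one m t1}"
  have "finite (extensions w T)"
    by (simp add: extensions_def finite_free_rows)
  then have "sum ?g (?E \<union> ?N) = sum ?g ?E + sum ?g ?N"
    by (intro sum.union_disjoint) auto
  moreover have "?E \<union> ?N = extensions w T"
    by blast
  ultimately have "(\<Sum>t1\<in>extensions w T. ?g t1) = sum ?g ?E + sum ?g ?N"
    by simp
  also have "\<dots> = 2 * (\<Sum>X\<in>Pow (free_rows w T). f (Suc (card X)))"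
    unfolding sum_extensions_balanced[OF assms, symmetric] sum_extensions_west_diagonal_one[OF assms] by simp
  finally show ?thesis
    using sum_Pow_card[OF finite_free_rows, of "\<lambda>k. f (Suc k)"] by simp
qed

lemma card_typeB_tableaux_filter_take_tableau:
  assumes "m \<le> n"
  shows "card {t \<in> typeB_tableaux n. P (take_tableau m t)} =
    (\<Sum>t1\<in>{t1 \<in> typeB_tableaux m. P t1}. card {t \<in> typeB_tableaux n. take_tableau m t = t1})"
proof -
  let ?S = "{t \<in> typeB_tableaux n. P (take_tableau m t)}"
  have "take_tableau m ` ?S \<subseteq> {t1 \<in> typeB_tableaux m. P t1}"
    using is_typeB_tableau_take_tableau assms by (auto simp: typeB_tableaux_def)
  then have "card ?S = (\<Sum>t1\<in>{t1 \<in> typeB_tableaux m. P t1}. card {t \<in> ?S. take_tableau m t = t1})"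
    using sum.group[of ?S "{t1 \<in> typeB_tableaux m. P t1}" "take_tableau m" "\<lambda>_. 1::nat"]
    by (simp add: finite_typeB_tableaux)
  also have "\<dots> = (\<Sum>t1\<in>{t1 \<in> typeB_tableaux m. P t1}. card {t \<in> typeB_tableaux n. take_tableau m t = t1})"
    by (intro sum.cong refl arg_cong[where f = card]) auto
  finally show ?thesis .
qed

fun completion_count :: "nat \<Rightarrow> nat \<Rightarrow> nat" where
  "completion_count 0 u = 1"
| "completion_count (Suc j) u = 2 * (\<Sum>k\<le>u. (u choose k) * completion_count j (Suc k))"

lemma card_completions:
  "is_typeB_tableau m (w, T) \<Longrightarrow>
    card {t \<in> typeB_tableaux (m + j). take_tableau m t = (w, T)} = completion_count j (card (free_rows w T))"
proof (induction j arbitrary: m w T)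
  case 0
  then have "{t \<in> typeB_tableaux m. take_tableau m t = (w, T)} = {(w, T)}"
    using take_tableau_self by (auto simp: typeB_tableaux_def)
  then show ?case
    by simp
next
  case (Suc j)
  have "card {t \<in> typeB_tableaux (m + Suc j). take_tableau m t = (w, T)} =
      card {t \<in> typeB_tableaux (Suc m + j). take_tableau m (take_tableau (Suc m) t) = (w, T)}"
    by (simp add: take_tableau_take_tableau)
  also have "\<dots> = (\<Sum>t1\<in>extensions w T. card {t \<in> typeB_tableaux (Suc m + j). take_tableau (Suc m) t = t1})"
    using card_typeB_tableaux_filter_take_tableau[of "Suc m" "Suc m + j" "\<lambda>t1. take_tableau m t1 = (w, T)"]
    by (simp add: typeB_tableaux_fibre_eq_extensions[OF Suc.prems])
  also have "\<dots> = (\<Sum>t1\<in>extensions w T. completion_count j (card (case_prod free_rows t1)))"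
  proof (intro sum.cong refl)
    fix t1 assume "t1 \<in> extensions w T"
    moreover obtain w1 T1 where t1: "t1 = (w1, T1)"
      by (cases t1)
    ultimately have "is_typeB_tableau (Suc m) (w1, T1)"
      using mem_extensionsD[OF Suc.prems] by simp
    then show "card {t \<in> typeB_tableaux (Suc m + j). take_tableau (Suc m) t = t1} =
        completion_count j (card (case_prod free_rows t1))"
      using Suc.IH[OF \<open>is_typeB_tableau (Suc m) (w1, T1)\<close>] t1 by simp
  qed
  also have "\<dots> = completion_count (Suc j) (card (free_rows w T))"
    using sum_extensions[OF Suc.prems] by simp
  finally show ?case .
qed

lemma card_typeB_tableaux_filter_Suc:
  "card {t \<in> typeB_tableaux (Suc p + j). Q (take_tableau (Suc p) t)} =
    (\<Sum>(w, T)\<in>typeB_tableaux p. \<Sum>t1\<in>{t1 \<in> extensions w T. Q t1}.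
       completion_count j (card (case_prod free_rows t1)))"
proof -
  let ?c = "\<lambda>t1. completion_count j (card (case_prod free_rows t1))"
  have "card {t \<in> typeB_tableaux (Suc p + j). Q (take_tableau (Suc p) t)} =
      (\<Sum>t1\<in>{t1 \<in> typeB_tableaux (Suc p). Q t1}. ?c t1)"
    unfolding card_typeB_tableaux_filter_take_tableau[OF le_add1]
    using card_completions[of "Suc p"] by (intro sum.cong refl) (auto simp: typeB_tableaux_def)
  also have "\<dots> = (\<Sum>t0\<in>typeB_tableaux p. \<Sum>t1\<in>{t1 \<in> {t1 \<in> typeB_tableaux (Suc p). Q t1}. take_tableau p t1 = t0}. ?c t1)"
    using is_typeB_tableau_take_tableau finite_typeB_tableaux[of p] finite_typeB_tableaux[of "Suc p"]
    by (intro sum.group[symmetric]) (auto simp: typeB_tableaux_def)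
  also have "\<dots> = (\<Sum>(w, T)\<in>typeB_tableaux p. \<Sum>t1\<in>{t1 \<in> extensions w T. Q t1}. ?c t1)"
  proof (intro sum.cong refl)
    fix t0 assume "t0 \<in> typeB_tableaux p"
    moreover obtain w T where "t0 = (w, T)"
      by (cases t0)
    ultimately show "(\<Sum>t1\<in>{t1 \<in> {t1 \<in> typeB_tableaux (Suc p). Q t1}. take_tableau p t1 = t0}. ?c t1) =
        (case t0 of (w, T) \<Rightarrow> \<Sum>t1\<in>{t1 \<in> extensions w T. Q t1}. ?c t1)"
      using typeB_tableaux_fibre_eq_extensions[of p w T] by (simp add: typeB_tableaux_def Collect_conj_eq Int_commute)
  qed
  finally show ?thesis .
qed

lemma card_typeB_tableaux_west_diagonal_one:
  "card (typeB_tableaux (Suc p + j)) = 2 * card {t \<in> typeB_tableaux (Suc p + j). west_diagonal_one p t}"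
proof -
  let ?B = "typeB_tableaux (Suc p + j)"
  have "card {t \<in> ?B. west_diagonal_one p (take_tableau (Suc p) t)} =
      card {t \<in> ?B. \<not> west_diagonal_one p (take_tableau (Suc p) t)}"
    unfolding card_typeB_tableaux_filter_Suc[where Q = "west_diagonal_one p"]
      card_typeB_tableaux_filter_Suc[where Q = "\<lambda>t. \<not> west_diagonal_one p t"]
  proof (intro sum.cong refl)
    fix t0 assume "t0 \<in> typeB_tableaux p"
    then show "(case t0 of (w, T) \<Rightarrow> \<Sum>t1\<in>{t1 \<in> extensions w T. west_diagonal_one p t1}.
          completion_count j (card (case_prod free_rows t1))) =
        (case t0 of (w, T) \<Rightarrow> \<Sum>t1\<in>{t1 \<in> extensions w T. \<not> west_diagonal_one p t1}.
          completion_count j (card (case_prod free_rows t1)))"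
      using sum_extensions_balanced by (cases t0) (simp add: typeB_tableaux_def)
  qed
  then have "card {t \<in> ?B. west_diagonal_one p t} = card {t \<in> ?B. \<not> west_diagonal_one p t}"
    by (simp add: west_diagonal_one_take_tableau)
  moreover have "card ?B = card {t \<in> ?B. west_diagonal_one p t} + card {t \<in> ?B. \<not> west_diagonal_one p t}"
  proof -
    have "card ?B = card ({t \<in> ?B. west_diagonal_one p t} \<union> {t \<in> ?B. \<not> west_diagonal_one p t})"
      by (rule arg_cong[where f = card]) blast
    also have "\<dots> = card {t \<in> ?B. west_diagonal_one p t} + card {t \<in> ?B. \<not> west_diagonal_one p t}"
      using finite_typeB_tableaux by (intro card_Un_disjoint) auto
    finally show ?thesis .
  qed
  ultimately show ?thesis
    by simp
qed

theorem mainTheorem6: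
  fixes n k :: nat
  assumes "1 \<le> k" and "k \<le> n"
  shows "measure_pmf.prob (PB n)
           {t. fst t ! (k - 1) = West \<and> (k - 1, k - 1) \<in> snd t} = 1 / 2"
proof -
  define p where "p = k - 1"
  let ?B = "typeB_tableaux n"
  let ?A = "{t. fst t ! (k - 1) = West \<and> (k - 1, k - 1) \<in> snd t}"
  have nonempty: "?B \<noteq> {}"
    using all_South_in_typeB_tableaux by blast
  have "Suc p + (n - k) = n"
    using assms unfolding p_def by simp
  then have half: "card ?B = 2 * card {t \<in> ?B. west_diagonal_one p t}"
    using card_typeB_tableaux_west_diagonal_one[of p "n - k"] by simp
  moreover have "card ?B > 0"
    using nonempty finite_typeB_tableaux by (simp add: card_gt_0_iff)
  ultimately have pos: "card {t \<in> ?B. west_diagonal_one p t} > 0"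
    by simp
  have event: "?B \<inter> ?A = {t \<in> ?B. west_diagonal_one p t}"
    by (auto simp: west_diagonal_one_def p_def)
  have "measure_pmf.prob (PB n) ?A = card (?B \<inter> ?A) / card ?B"
    unfolding PB_def by (rule measure_pmf_of_set[OF nonempty finite_typeB_tableaux])
  then show ?thesis
    using half pos unfolding event by simp
qed

end
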